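(* Let $s\ge0$. For every $\delta>0$ there exists $C_\delta>0$ such that for all $\alpha,M\in\mathbb{R}$ and all $u_1,u_2,u_3\in H^s(\mathbb{R})$, $\|T^{\alpha,M}(u_1,u_2,u_3)\|_{H^s}\le C_\delta\langle\alpha\rangle^{\delta}\langle M\rangle^{1/2+\delta}\prod_{j=1}^3\|u_j\|_{H^s}$.
   Context: (Setting of the cubic NLS.) $\langle a\rangle=(1+|a|^2)^{1/2}$; $\Xi=(\xi,\xi_1,\xi_2,\xi_3)$, $\Phi(\Xi)=(\xi-\xi_1)(\xi-\xi_3)$, $m(\Xi)=1$, and $\mathcal{F}[T^{\alpha,M}(u_1,u_2,u_3)](\xi)=\int_{\xi_1+\xi_2+\xi_3=\xi,\ |\Phi(\Xi)-\alpha|<M}\hat u_1(\xi_1)\hat u_2(\xi_2)\hat u_3(\xi_3)\,d\xi_1d\xi_3$. *)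

theory Defs
  imports "HOL-Analysis.Analysis"
begin

text \<open>Everything is stated on the Fourier side: a function u in H^s(R) is
represented by its Fourier transform v = u-hat, a complex-valued function on R.\<close>

definition jb :: "real \<Rightarrow> real" where
  "jb a = sqrt (1 + a\<^sup>2)"

definition Phi :: "real \<Rightarrow> real \<Rightarrow> real \<Rightarrow> real" where
  "Phi \<xi> \<xi>1 \<xi>3 = (\<xi> - \<xi>1) * (\<xi> - \<xi>3)"

definition in_Hs :: "real \<Rightarrow> (real \<Rightarrow> complex) \<Rightarrow> bool" where
  "in_Hs s v \<longleftrightarrow> v \<in> borel_measurable lborel \<and>
     integrable lborel (\<lambda>\<xi>. jb \<xi> powr (2 * s) * (cmod (v \<xi>))\<^sup>2)"

definition Hs_norm :: "real \<Rightarrow> (real \<Rightarrow> complex) \<Rightarrow> real" where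
  "Hs_norm s v = sqrt (\<integral> \<xi>. jb \<xi> powr (2 * s) * (cmod (v \<xi>))\<^sup>2 \<partial>lborel)"

definition Hs_enorm_sq :: "real \<Rightarrow> (real \<Rightarrow> complex) \<Rightarrow> ennreal" where
  "Hs_enorm_sq s v = (\<integral>\<^sup>+ \<xi>. ennreal (jb \<xi> powr (2 * s) * (cmod (v \<xi>))\<^sup>2) \<partial>lborel)"

text \<open>Fourier transform of T^{alpha,M}(u1,u2,u3) at xi, given the Fourier
transforms v1 v2 v3; integration over (xi1, xi3) with xi2 = xi - xi1 - xi3, m = 1.\<close>
definition T_hat :: "real \<Rightarrow> real \<Rightarrow> (real \<Rightarrow> complex) \<Rightarrow> (real \<Rightarrow> complex) \<Rightarrow>
    (real \<Rightarrow> complex) \<Rightarrow> real \<Rightarrow> complex" where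
  "T_hat \<alpha> M v1 v2 v3 \<xi> =
     (\<integral> p. indicator {p. \<bar>Phi \<xi> (fst p) (snd p) - \<alpha>\<bar> < M} p *
            v1 (fst p) * v2 (\<xi> - fst p - snd p) * v3 (snd p) \<partial>(lborel :: (real \<times> real) measure))"

end

theory Submission
  imports Defs
begin

(* Bound |T(xi)| by the trilinear integral of the |v_j| and distribute the weight <xi>^s over the
   three input frequencies, using <a + b + c> <= sqrt 3 <a> <b> <c>.  Cauchy-Schwarz in (xi1, xi3)
   separates v2 from the pair v1, v3, and both factors are controlled by one observation: every
   one-dimensional slice of the near-resonant set {|Phi - alpha| < M} is a sublevel set of a monic
   quadratic, so it has measure at most 2 sqrt (2 M).  For v2 we slice along xi1 + xi3 = const at
   fixed xi, for v1 and v3 we slice in xi at fixed (xi1, xi3).  This gives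
   ||T||^2 <= 8 3^s M ||u1||^2 ||u2||^2 ||u3||^2, and M <= <alpha>^(2 delta) <M>^(1 + 2 delta). *)

definition near_resonant :: "real \<Rightarrow> real \<Rightarrow> real \<Rightarrow> (real \<times> real) set" where
  "near_resonant \<alpha> M \<xi> = {p. \<bar>Phi \<xi> (fst p) (snd p) - \<alpha>\<bar> < M}"

definition Hs_weight :: "real \<Rightarrow> (real \<Rightarrow> complex) \<Rightarrow> real \<Rightarrow> ennreal" where
  "Hs_weight s v \<xi> = ennreal (jb \<xi> powr s * cmod (v \<xi>))"

lemma jb_ge_1: "jb a \<ge> 1"
  unfolding jb_def by simp

lemma jb_pos: "jb a > 0"
  using jb_ge_1[of a] by simp

lemma abs_le_jb: "\<bar>a\<bar> \<le> jb a"
  unfolding jb_def using real_sqrt_le_mono[of "a\<^sup>2" "1 + a\<^sup>2"] by simp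

lemma borel_measurable_jb [measurable]: "jb \<in> borel_measurable borel"
  unfolding jb_def[abs_def] by measurable

lemma jb_powr_double: "jb a powr (2 * s) = (jb a powr s)\<^sup>2"
  using jb_pos[of a] by (simp add: power2_eq_square powr_add[symmetric])

lemma jb_add3_powr_le:
  assumes "s \<ge> 0"
  shows "jb (a + b + c) powr s \<le> 3 powr (s/2) * jb a powr s * jb b powr s * jb c powr s"
proof -
  have "0 \<le> (a - b)\<^sup>2 + (b - c)\<^sup>2 + (a - c)\<^sup>2"
    by simp
  then have "1 + (a + b + c)\<^sup>2 \<le> 3 * (1 + a\<^sup>2 + b\<^sup>2 + c\<^sup>2)"
    by (simp add: power2_eq_square algebra_simps)
  also have "\<dots> \<le> 3 * ((1 + a\<^sup>2) * (1 + b\<^sup>2) * (1 + c\<^sup>2))"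
    by (simp add: algebra_simps)
  finally have "jb (a + b + c) \<le> sqrt 3 * jb a * jb b * jb c"
    unfolding jb_def by (simp only: real_sqrt_mult[symmetric] real_sqrt_le_iff)
  then have "jb (a + b + c) powr s \<le> (sqrt 3 * jb a * jb b * jb c) powr s"
    using assms jb_pos by (intro powr_mono2) (auto simp: less_imp_le)
  also have "\<dots> = 3 powr (s/2) * jb a powr s * jb b powr s * jb c powr s"
    using jb_pos by (simp add: powr_mult powr_half_sqrt[symmetric] powr_powr)
  finally show ?thesis .
qed

lemma Hs_weight_mult_le:
  assumes "s \<ge> 0"
  shows "ennreal (jb (x + z + y) powr s) * (ennreal (cmod (v1 x)) * ennreal (cmod (v2 z)) * ennreal (cmod (v3 y)))
    \<le> ennreal (3 powr (s/2)) * (Hs_weight s v1 x * Hs_weight s v2 z * Hs_weight s v3 y)"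
proof -
  have "jb (x + z + y) powr s * (cmod (v1 x) * cmod (v2 z) * cmod (v3 y))
      \<le> (3 powr (s/2) * jb x powr s * jb z powr s * jb y powr s) * (cmod (v1 x) * cmod (v2 z) * cmod (v3 y))"
    by (intro mult_right_mono jb_add3_powr_le assms) auto
  then show ?thesis
    unfolding Hs_weight_def by (simp add: ennreal_mult[symmetric] ac_simps)
qed

lemma Hs_enorm_sq_eq_nn_integral_Hs_weight:
  "Hs_enorm_sq s v = (\<integral>\<^sup>+\<xi>. (Hs_weight s v \<xi>)\<^sup>2 \<partial>lborel)"
  unfolding Hs_enorm_sq_def Hs_weight_def
  by (simp add: jb_powr_double ennreal_power power_mult_distrib)

lemma Hs_enorm_sq_eq_Hs_norm:
  assumes "in_Hs s v"
  shows "Hs_enorm_sq s v = ennreal ((Hs_norm s v)\<^sup>2)"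
  using assms unfolding in_Hs_def Hs_enorm_sq_def Hs_norm_def
  by (simp add: nn_integral_eq_integral integral_nonneg)

lemma emeasure_quadratic_sublevel_le:
  fixes b c M :: real
  assumes "M \<ge> 0"
  shows "emeasure lborel {x. \<bar>x * x + b * x + c\<bar> < M} \<le> ennreal (2 * sqrt (2 * M))"
proof -
  define d where "d = b * b / 4 - c"
  define U where "U = sqrt (max (d + M) 0)"
  define L where "L = sqrt (max (d - M) 0)"
  have "L \<le> U" "0 \<le> L"
    unfolding L_def U_def using assms by (auto simp: real_sqrt_le_iff)
  have "U\<^sup>2 \<le> L\<^sup>2 + 2 * M"
    unfolding L_def U_def using assms by auto
  then have "U \<le> sqrt (L\<^sup>2 + 2 * M)"
    using \<open>0 \<le> L\<close> \<open>L \<le> U\<close> real_le_rsqrt by fastforce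
  also have "\<dots> \<le> L + sqrt (2 * M)"
    using sqrt_add_le_add_sqrt[of "L\<^sup>2" "2 * M"] \<open>0 \<le> L\<close> assms by simp
  finally have "U - L \<le> sqrt (2 * M)"
    by simp
  \<comment> \<open>completing the square, the sublevel set is \<open>{x. d - M < (x + b/2)\<^sup>2 < d + M}\<close>\<close>
  have "{x. \<bar>x * x + b * x + c\<bar> < M} \<subseteq> {-b/2 - U..-b/2 - L} \<union> {-b/2 + L..-b/2 + U}"
  proof
    fix x assume "x \<in> {x. \<bar>x * x + b * x + c\<bar> < M}"
    then have "\<bar>(x + b/2)\<^sup>2 - d\<bar> < M"
      unfolding d_def by (simp add: power2_eq_square algebra_simps)
    then have "(x + b/2)\<^sup>2 \<le> max (d + M) 0" "max (d - M) 0 \<le> (x + b/2)\<^sup>2"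
      by auto
    then have "\<bar>x + b/2\<bar> \<le> U" "L \<le> \<bar>x + b/2\<bar>"
      unfolding L_def U_def by (metis real_sqrt_abs real_sqrt_le_mono)+
    then show "x \<in> {-b/2 - U..-b/2 - L} \<union> {-b/2 + L..-b/2 + U}"
      by auto
  qed
  then have "emeasure lborel {x. \<bar>x * x + b * x + c\<bar> < M}
      \<le> emeasure lborel ({-b/2 - U..-b/2 - L} \<union> {-b/2 + L..-b/2 + U})"
    by (intro emeasure_mono) auto
  also have "\<dots> \<le> emeasure lborel {-b/2 - U..-b/2 - L} + emeasure lborel {-b/2 + L..-b/2 + U}"
    by (intro emeasure_subadditive) auto
  also have "\<dots> = ennreal (2 * (U - L))"
    using \<open>L \<le> U\<close> by (simp flip: ennreal_plus)
  also have "\<dots> \<le> ennreal (2 * sqrt (2 * M))"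
    using \<open>U - L \<le> sqrt (2 * M)\<close> by (intro ennreal_leI) simp
  finally show ?thesis .
qed

lemma pred_near_resonant [measurable (raw)]:
  assumes [measurable]: "f \<in> borel_measurable N" "g \<in> N \<rightarrow>\<^sub>M borel \<Otimes>\<^sub>M borel"
  shows "Measurable.pred N (\<lambda>z. g z \<in> near_resonant \<alpha> M (f z))"
  unfolding near_resonant_def Phi_def by measurable

lemma emeasure_near_resonant_antidiagonal_le:
  assumes "M \<ge> 0"
  shows "emeasure lborel {x. (x, \<sigma> - x) \<in> near_resonant \<alpha> M \<xi>} \<le> ennreal (2 * sqrt (2 * M))"
proof -
  have "Phi \<xi> x (\<sigma> - x) - \<alpha> = - (x * x + (- \<sigma>) * x + (\<alpha> - \<xi> * (\<xi> - \<sigma>)))" for x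
    unfolding Phi_def by (simp add: algebra_simps)
  then have "{x. (x, \<sigma> - x) \<in> near_resonant \<alpha> M \<xi>} = {x. \<bar>x * x + (- \<sigma>) * x + (\<alpha> - \<xi> * (\<xi> - \<sigma>))\<bar> < M}"
    unfolding near_resonant_def by (simp only: mem_Collect_eq fst_conv snd_conv abs_minus_cancel)
  then show ?thesis
    using emeasure_quadratic_sublevel_le[OF assms] by (simp only:)
qed

lemma emeasure_near_resonant_xi_slice_le:
  assumes "M \<ge> 0"
  shows "emeasure lborel {\<xi>. (x, y) \<in> near_resonant \<alpha> M \<xi>} \<le> ennreal (2 * sqrt (2 * M))"
proof -
  have "Phi \<xi> x y - \<alpha> = \<xi> * \<xi> + (- (x + y)) * \<xi> + (x * y - \<alpha>)" for \<xi>
    unfolding Phi_def by (simp add: algebra_simps)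
  then have "{\<xi>. (x, y) \<in> near_resonant \<alpha> M \<xi>} = {\<xi>. \<bar>\<xi> * \<xi> + (- (x + y)) * \<xi> + (x * y - \<alpha>)\<bar> < M}"
    unfolding near_resonant_def by (simp only: mem_Collect_eq fst_conv snd_conv)
  then show ?thesis
    using emeasure_quadratic_sublevel_le[OF assms] by (simp only:)
qed

lemma nn_integral_near_resonant_convolution_le:
  fixes f :: "real \<Rightarrow> ennreal"
  assumes "M \<ge> 0" and [measurable]: "f \<in> borel_measurable borel"
  shows "(\<integral>\<^sup>+x. \<integral>\<^sup>+y. indicator (near_resonant \<alpha> M \<xi>) (x, y) * f (\<xi> - x - y) \<partial>lborel \<partial>lborel)
    \<le> ennreal (2 * sqrt (2 * M)) * (\<integral>\<^sup>+z. f z \<partial>lborel)"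
proof -
  let ?A = "near_resonant \<alpha> M \<xi>" and ?c = "ennreal (2 * sqrt (2 * M))"
  have "(\<integral>\<^sup>+x. \<integral>\<^sup>+y. indicator ?A (x, y) * f (\<xi> - x - y) \<partial>lborel \<partial>lborel)
      = (\<integral>\<^sup>+x. \<integral>\<^sup>+\<sigma>. indicator ?A (x, \<sigma> - x) * f (\<xi> - \<sigma>) \<partial>lborel \<partial>lborel)"
  proof (rule nn_integral_cong)
    fix x :: real
    show "(\<integral>\<^sup>+y. indicator ?A (x, y) * f (\<xi> - x - y) \<partial>lborel)
        = (\<integral>\<^sup>+\<sigma>. indicator ?A (x, \<sigma> - x) * f (\<xi> - \<sigma>) \<partial>lborel)"
      by (subst nn_integral_real_affine[where c=1 and t="- x"]) auto
  qed
  also have "\<dots> = (\<integral>\<^sup>+\<sigma>. \<integral>\<^sup>+x. indicator ?A (x, \<sigma> - x) * f (\<xi> - \<sigma>) \<partial>lborel \<partial>lborel)"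
    by (rule lborel_pair.Fubini'[symmetric]) measurable
  also have "\<dots> = (\<integral>\<^sup>+\<sigma>. f (\<xi> - \<sigma>) * emeasure lborel {x. (x, \<sigma> - x) \<in> ?A} \<partial>lborel)"
  proof (rule nn_integral_cong)
    fix \<sigma> :: real
    have "{x. (x, \<sigma> - x) \<in> ?A} \<in> sets lborel"
      by measurable
    then show "(\<integral>\<^sup>+x. indicator ?A (x, \<sigma> - x) * f (\<xi> - \<sigma>) \<partial>lborel)
        = f (\<xi> - \<sigma>) * emeasure lborel {x. (x, \<sigma> - x) \<in> ?A}"
      by (simp add: nn_integral_cmult_indicator[symmetric] indicator_def mult.commute)
  qed
  also have "\<dots> \<le> (\<integral>\<^sup>+\<sigma>. f (\<xi> - \<sigma>) * ?c \<partial>lborel)"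
    by (intro nn_integral_mono mult_left_mono emeasure_near_resonant_antidiagonal_le assms) auto
  also have "\<dots> = (\<integral>\<^sup>+\<sigma>. f (\<xi> - \<sigma>) \<partial>lborel) * ?c"
    by (rule nn_integral_multc) measurable
  also have "(\<integral>\<^sup>+\<sigma>. f (\<xi> - \<sigma>) \<partial>lborel) = (\<integral>\<^sup>+z. f z \<partial>lborel)"
    by (subst nn_integral_real_affine[where c="-1" and t=\<xi>]) auto
  finally show ?thesis
    by (simp add: mult.commute)
qed

lemma nn_integral_near_resonant_le:
  fixes g :: "real \<Rightarrow> real \<Rightarrow> ennreal"
  assumes "M \<ge> 0" and [measurable]: "case_prod g \<in> borel_measurable (borel \<Otimes>\<^sub>M borel)"
  shows "(\<integral>\<^sup>+\<xi>. \<integral>\<^sup>+x. \<integral>\<^sup>+y. indicator (near_resonant \<alpha> M \<xi>) (x, y) * g x y \<partial>lborel \<partial>lborel \<partial>lborel)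
    \<le> ennreal (2 * sqrt (2 * M)) * (\<integral>\<^sup>+x. \<integral>\<^sup>+y. g x y \<partial>lborel \<partial>lborel)"
proof -
  let ?A = "near_resonant \<alpha> M" and ?c = "ennreal (2 * sqrt (2 * M))"
  have [measurable]: "g x \<in> borel_measurable borel" for x
    using measurable_Pair2[OF assms(2), of x] by simp
  have "(\<integral>\<^sup>+\<xi>. \<integral>\<^sup>+x. \<integral>\<^sup>+y. indicator (?A \<xi>) (x, y) * g x y \<partial>lborel \<partial>lborel \<partial>lborel)
      = (\<integral>\<^sup>+x. \<integral>\<^sup>+\<xi>. \<integral>\<^sup>+y. indicator (?A \<xi>) (x, y) * g x y \<partial>lborel \<partial>lborel \<partial>lborel)"
    by (rule lborel_pair.Fubini'[symmetric]) measurable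
  also have "\<dots> = (\<integral>\<^sup>+x. \<integral>\<^sup>+y. \<integral>\<^sup>+\<xi>. indicator (?A \<xi>) (x, y) * g x y \<partial>lborel \<partial>lborel \<partial>lborel)"
    by (intro nn_integral_cong lborel_pair.Fubini') measurable
  also have "\<dots> = (\<integral>\<^sup>+x. \<integral>\<^sup>+y. emeasure lborel {\<xi>. (x, y) \<in> ?A \<xi>} * g x y \<partial>lborel \<partial>lborel)"
  proof (intro nn_integral_cong)
    fix x y :: real
    have "{\<xi>. (x, y) \<in> ?A \<xi>} \<in> sets lborel"
      by measurable
    then show "(\<integral>\<^sup>+\<xi>. indicator (?A \<xi>) (x, y) * g x y \<partial>lborel) = emeasure lborel {\<xi>. (x, y) \<in> ?A \<xi>} * g x y"
      by (simp add: nn_integral_cmult_indicator[symmetric] indicator_def mult.commute)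
  qed
  also have "\<dots> \<le> (\<integral>\<^sup>+x. \<integral>\<^sup>+y. ?c * g x y \<partial>lborel \<partial>lborel)"
    by (intro nn_integral_mono mult_right_mono emeasure_near_resonant_xi_slice_le assms) auto
  also have "\<dots> = ?c * (\<integral>\<^sup>+x. \<integral>\<^sup>+y. g x y \<partial>lborel \<partial>lborel)"
    by (simp add: nn_integral_cmult)
  finally show ?thesis .
qed

lemma (in sigma_finite_measure) Cauchy_Schwarz_nn_integral_iterated:
  fixes F G :: "'b \<Rightarrow> 'a \<Rightarrow> ennreal"
  assumes [measurable]: "case_prod F \<in> borel_measurable (N \<Otimes>\<^sub>M M)" "case_prod G \<in> borel_measurable (N \<Otimes>\<^sub>M M)"
  shows "(\<integral>\<^sup>+x. \<integral>\<^sup>+y. F x y * G x y \<partial>M \<partial>N)\<^sup>2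
    \<le> (\<integral>\<^sup>+x. \<integral>\<^sup>+y. (F x y)\<^sup>2 \<partial>M \<partial>N) * (\<integral>\<^sup>+x. \<integral>\<^sup>+y. (G x y)\<^sup>2 \<partial>M \<partial>N)"
  using Cauchy_Schwarz_nn_integral[of "case_prod F" "N \<Otimes>\<^sub>M M" "case_prod G"]
  by (simp add: nn_integral_fst[symmetric, where f = "\<lambda>p. case_prod F p * case_prod G p"]
      nn_integral_fst[symmetric, where f = "\<lambda>p. (case_prod F p)\<^sup>2"]
      nn_integral_fst[symmetric, where f = "\<lambda>p. (case_prod G p)\<^sup>2"])

lemma borel_measurable_Hs_weight [measurable]:
  "v \<in> borel_measurable borel \<Longrightarrow> Hs_weight s v \<in> borel_measurable borel"
  unfolding Hs_weight_def[abs_def] by measurable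

lemma T_hat_nonpos_eq_0:
  assumes "M \<le> 0"
  shows "T_hat \<alpha> M v1 v2 v3 \<xi> = 0"
proof -
  have "\<not> \<bar>Phi \<xi> (fst p) (snd p) - \<alpha>\<bar> < M" for p
    using assms by linarith
  then show ?thesis
    unfolding T_hat_def by simp
qed

lemma norm_T_hat_le:
  assumes [measurable]: "v1 \<in> borel_measurable borel" "v2 \<in> borel_measurable borel" "v3 \<in> borel_measurable borel"
  shows "ennreal (cmod (T_hat \<alpha> M v1 v2 v3 \<xi>)) \<le>
    (\<integral>\<^sup>+x. \<integral>\<^sup>+y. indicator (near_resonant \<alpha> M \<xi>) (x, y) *
       (ennreal (cmod (v1 x)) * ennreal (cmod (v2 (\<xi> - x - y))) * ennreal (cmod (v3 y))) \<partial>lborel \<partial>lborel)"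
proof -
  define f where "f p = indicator (near_resonant \<alpha> M \<xi>) p * v1 (fst p) * v2 (\<xi> - fst p - snd p) * v3 (snd p)"
    for p :: "real \<times> real"
  have [measurable]: "f \<in> borel_measurable (lborel \<Otimes>\<^sub>M lborel)"
    unfolding f_def[abs_def] by measurable
  have "T_hat \<alpha> M v1 v2 v3 \<xi> = integral\<^sup>L (lborel \<Otimes>\<^sub>M lborel) f"
    unfolding T_hat_def f_def near_resonant_def by (simp add: lborel_prod)
  moreover have "norm (integral\<^sup>L (lborel \<Otimes>\<^sub>M lborel) f) \<le> (\<integral>\<^sup>+p. norm (f p) \<partial>(lborel \<Otimes>\<^sub>M lborel))"
    by (cases "integrable (lborel \<Otimes>\<^sub>M lborel) f")
      (simp_all add: integral_norm_bound_ennreal not_integrable_integral_eq)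
  moreover have "(\<integral>\<^sup>+p. norm (f p) \<partial>(lborel \<Otimes>\<^sub>M lborel)) = (\<integral>\<^sup>+x. \<integral>\<^sup>+y. norm (f (x, y)) \<partial>lborel \<partial>lborel)"
    by (rule lborel.nn_integral_fst[symmetric]) measurable
  moreover have "ennreal (norm (f (x, y))) = indicator (near_resonant \<alpha> M \<xi>) (x, y) *
      (ennreal (cmod (v1 x)) * ennreal (cmod (v2 (\<xi> - x - y))) * ennreal (cmod (v3 y)))" for x y
    unfolding f_def by (simp add: norm_mult ennreal_mult split: split_indicator)
  ultimately show ?thesis
    by simp
qed

lemma Hs_weight_T_hat_le:
  assumes "s \<ge> 0"
    and [measurable]: "v1 \<in> borel_measurable borel" "v2 \<in> borel_measurable borel" "v3 \<in> borel_measurable borel"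
  shows "Hs_weight s (T_hat \<alpha> M v1 v2 v3) \<xi> \<le> ennreal (3 powr (s/2)) *
    (\<integral>\<^sup>+x. \<integral>\<^sup>+y. indicator (near_resonant \<alpha> M \<xi>) (x, y) *
       (Hs_weight s v1 x * Hs_weight s v2 (\<xi> - x - y) * Hs_weight s v3 y) \<partial>lborel \<partial>lborel)"
proof -
  let ?A = "near_resonant \<alpha> M \<xi>" and ?j = "ennreal (jb \<xi> powr s)"
  have "Hs_weight s (T_hat \<alpha> M v1 v2 v3) \<xi> = ?j * ennreal (cmod (T_hat \<alpha> M v1 v2 v3 \<xi>))"
    unfolding Hs_weight_def by (simp add: ennreal_mult)
  also have "\<dots> \<le> ?j * (\<integral>\<^sup>+x. \<integral>\<^sup>+y. indicator ?A (x, y) *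
       (ennreal (cmod (v1 x)) * ennreal (cmod (v2 (\<xi> - x - y))) * ennreal (cmod (v3 y))) \<partial>lborel \<partial>lborel)"
    by (intro mult_left_mono norm_T_hat_le) auto
  also have "\<dots> = (\<integral>\<^sup>+x. \<integral>\<^sup>+y. indicator ?A (x, y) *
       (?j * (ennreal (cmod (v1 x)) * ennreal (cmod (v2 (\<xi> - x - y))) * ennreal (cmod (v3 y)))) \<partial>lborel \<partial>lborel)"
    by (simp add: nn_integral_cmult[symmetric] ac_simps)
  also have "\<dots> \<le> (\<integral>\<^sup>+x. \<integral>\<^sup>+y. indicator ?A (x, y) *
       (ennreal (3 powr (s/2)) * (Hs_weight s v1 x * Hs_weight s v2 (\<xi> - x - y) * Hs_weight s v3 y)) \<partial>lborel \<partial>lborel)"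
    using Hs_weight_mult_le[OF assms(1), where z = "\<xi> - x - y" and x = x and y = y for x y]
    by (intro nn_integral_mono mult_left_mono) auto
  also have "\<dots> = ennreal (3 powr (s/2)) * (\<integral>\<^sup>+x. \<integral>\<^sup>+y. indicator ?A (x, y) *
       (Hs_weight s v1 x * Hs_weight s v2 (\<xi> - x - y) * Hs_weight s v3 y) \<partial>lborel \<partial>lborel)"
    by (simp add: nn_integral_cmult[symmetric] ac_simps)
  finally show ?thesis .
qed

lemma Hs_weight_T_hat_sq_le:
  assumes "s \<ge> 0" "M \<ge> 0"
    and [measurable]: "v1 \<in> borel_measurable borel" "v2 \<in> borel_measurable borel" "v3 \<in> borel_measurable borel"
  shows "(Hs_weight s (T_hat \<alpha> M v1 v2 v3) \<xi>)\<^sup>2 \<le>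
    ennreal (3 powr s) * (ennreal (2 * sqrt (2 * M)) * Hs_enorm_sq s v2) *
    (\<integral>\<^sup>+x. \<integral>\<^sup>+y. indicator (near_resonant \<alpha> M \<xi>) (x, y) * (Hs_weight s v1 x * Hs_weight s v3 y)\<^sup>2 \<partial>lborel \<partial>lborel)"
proof -
  let ?A = "near_resonant \<alpha> M \<xi>"
  let ?W1 = "Hs_weight s v1" and ?W2 = "Hs_weight s v2" and ?W3 = "Hs_weight s v3"
  let ?F = "\<lambda>x y. indicator ?A (x, y) * ?W2 (\<xi> - x - y)"
  let ?G = "\<lambda>x y. indicator ?A (x, y) * (?W1 x * ?W3 y)"
  have "(3::real) powr s = (3 powr (s/2))\<^sup>2"
    by (simp add: power2_eq_square flip: powr_add)
  then have three: "ennreal (3 powr s) = (ennreal (3 powr (s/2)))\<^sup>2"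
    by (simp add: ennreal_power)
  have "?F x y * ?G x y = indicator ?A (x, y) * (?W1 x * ?W2 (\<xi> - x - y) * ?W3 y)" for x y
    by (simp add: ac_simps split: split_indicator)
  then have "(Hs_weight s (T_hat \<alpha> M v1 v2 v3) \<xi>)\<^sup>2
      \<le> (ennreal (3 powr (s/2)) * (\<integral>\<^sup>+x. \<integral>\<^sup>+y. ?F x y * ?G x y \<partial>lborel \<partial>lborel))\<^sup>2"
    using Hs_weight_T_hat_le[OF assms(1,3-5), of \<alpha> M \<xi>] by (intro power_mono) simp_all
  also have "\<dots> = ennreal (3 powr s) * (\<integral>\<^sup>+x. \<integral>\<^sup>+y. ?F x y * ?G x y \<partial>lborel \<partial>lborel)\<^sup>2"
    by (simp only: three power_mult_distrib)
  also have "\<dots> \<le> ennreal (3 powr s) *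
      ((\<integral>\<^sup>+x. \<integral>\<^sup>+y. (?F x y)\<^sup>2 \<partial>lborel \<partial>lborel) * (\<integral>\<^sup>+x. \<integral>\<^sup>+y. (?G x y)\<^sup>2 \<partial>lborel \<partial>lborel))"
    by (intro mult_left_mono lborel.Cauchy_Schwarz_nn_integral_iterated) simp_all
  also have "(\<integral>\<^sup>+x. \<integral>\<^sup>+y. (?F x y)\<^sup>2 \<partial>lborel \<partial>lborel)
      = (\<integral>\<^sup>+x. \<integral>\<^sup>+y. indicator ?A (x, y) * (\<lambda>z. (?W2 z)\<^sup>2) (\<xi> - x - y) \<partial>lborel \<partial>lborel)"
    by (intro nn_integral_cong) (simp add: power_mult_distrib split: split_indicator)
  also have "\<dots> \<le> ennreal (2 * sqrt (2 * M)) * Hs_enorm_sq s v2"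
    unfolding Hs_enorm_sq_eq_nn_integral_Hs_weight
    by (rule nn_integral_near_resonant_convolution_le[OF assms(2)]) measurable
  also have "(\<integral>\<^sup>+x. \<integral>\<^sup>+y. (?G x y)\<^sup>2 \<partial>lborel \<partial>lborel)
      = (\<integral>\<^sup>+x. \<integral>\<^sup>+y. indicator ?A (x, y) * (?W1 x * ?W3 y)\<^sup>2 \<partial>lborel \<partial>lborel)"
    by (intro nn_integral_cong) (simp add: power_mult_distrib split: split_indicator)
  finally show ?thesis
    by (simp add: mult_right_mono mult_left_mono ac_simps)
qed

lemma Hs_enorm_sq_T_hat_le:
  assumes "s \<ge> 0" "M \<ge> 0" and v: "in_Hs s v1" "in_Hs s v2" "in_Hs s v3"
  shows "Hs_enorm_sq s (T_hat \<alpha> M v1 v2 v3)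
    \<le> ennreal (8 * 3 powr s * M * (Hs_norm s v1 * Hs_norm s v2 * Hs_norm s v3)\<^sup>2)"
proof -
  have [measurable]: "v1 \<in> borel_measurable borel" "v2 \<in> borel_measurable borel" "v3 \<in> borel_measurable borel"
    using v unfolding in_Hs_def by auto
  let ?c = "ennreal (2 * sqrt (2 * M))"
  define K where "K \<xi> = (\<integral>\<^sup>+x. \<integral>\<^sup>+y. indicator (near_resonant \<alpha> M \<xi>) (x, y) *
    (Hs_weight s v1 x * Hs_weight s v3 y)\<^sup>2 \<partial>lborel \<partial>lborel)" for \<xi>
  have [measurable]: "K \<in> borel_measurable borel"
    unfolding K_def[abs_def] by measurable
  have "Hs_enorm_sq s (T_hat \<alpha> M v1 v2 v3) = (\<integral>\<^sup>+\<xi>. (Hs_weight s (T_hat \<alpha> M v1 v2 v3) \<xi>)\<^sup>2 \<partial>lborel)"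
    by (rule Hs_enorm_sq_eq_nn_integral_Hs_weight)
  also have "\<dots> \<le> (\<integral>\<^sup>+\<xi>. ennreal (3 powr s) * (?c * Hs_enorm_sq s v2) * K \<xi> \<partial>lborel)"
    unfolding K_def by (intro nn_integral_mono Hs_weight_T_hat_sq_le assms) measurable
  also have "\<dots> = ennreal (3 powr s) * (?c * Hs_enorm_sq s v2) * (\<integral>\<^sup>+\<xi>. K \<xi> \<partial>lborel)"
    by (rule nn_integral_cmult) measurable
  also have "\<dots> \<le> ennreal (3 powr s) * (?c * Hs_enorm_sq s v2) *
      (?c * (\<integral>\<^sup>+x. \<integral>\<^sup>+y. (Hs_weight s v1 x * Hs_weight s v3 y)\<^sup>2 \<partial>lborel \<partial>lborel))"
    unfolding K_def by (intro mult_left_mono nn_integral_near_resonant_le assms(2)) measurable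
  also have "(\<integral>\<^sup>+x. \<integral>\<^sup>+y. (Hs_weight s v1 x * Hs_weight s v3 y)\<^sup>2 \<partial>lborel \<partial>lborel)
      = Hs_enorm_sq s v1 * Hs_enorm_sq s v3"
    by (simp add: Hs_enorm_sq_eq_nn_integral_Hs_weight power_mult_distrib nn_integral_cmult nn_integral_multc)
  also have "ennreal (3 powr s) * (?c * Hs_enorm_sq s v2) * (?c * (Hs_enorm_sq s v1 * Hs_enorm_sq s v3))
      = ennreal (8 * 3 powr s * M * (Hs_norm s v1 * Hs_norm s v2 * Hs_norm s v3)\<^sup>2)"
    using \<open>M \<ge> 0\<close>
    by (simp add: Hs_enorm_sq_eq_Hs_norm v ennreal_mult[symmetric] power_mult_distrib algebra_simps)
  finally show ?thesis .
qed

lemma abs_le_sq_jb_powr: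
  assumes "\<delta> \<ge> 0"
  shows "\<bar>M\<bar> \<le> (jb \<alpha> powr \<delta> * jb M powr (1/2 + \<delta>))\<^sup>2"
proof -
  have "\<bar>M\<bar> \<le> (jb M powr (1/2))\<^sup>2"
    using abs_le_jb[of M] jb_pos[of M] by (simp add: powr_half_sqrt)
  also have "\<dots> \<le> (jb M powr (1/2 + \<delta>))\<^sup>2"
    using jb_ge_1[of M] assms by (intro power_mono powr_mono) auto
  also have "\<dots> \<le> (jb \<alpha> powr \<delta> * jb M powr (1/2 + \<delta>))\<^sup>2"
    using ge_one_powr_ge_zero[OF jb_ge_1 assms, of \<alpha>] by (intro power_mono) (simp_all add: mult_le_cancel_right1)
  finally show ?thesis .
qed

lemma Hs_enorm_sq_T_hat_le_jb_powr:
  assumes "s \<ge> 0" "\<delta> \<ge> 0" "in_Hs s v1" "in_Hs s v2" "in_Hs s v3"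
  shows "Hs_enorm_sq s (T_hat \<alpha> M v1 v2 v3) \<le> ennreal ((sqrt (8 * 3 powr s) * jb \<alpha> powr \<delta> *
    jb M powr (1/2 + \<delta>) * Hs_norm s v1 * Hs_norm s v2 * Hs_norm s v3)\<^sup>2)"
proof (cases "M \<ge> 0")
  case True
  with assms have "Hs_enorm_sq s (T_hat \<alpha> M v1 v2 v3)
      \<le> ennreal (8 * 3 powr s * M * (Hs_norm s v1 * Hs_norm s v2 * Hs_norm s v3)\<^sup>2)"
    by (intro Hs_enorm_sq_T_hat_le)
  also have "\<dots> \<le> ennreal (8 * 3 powr s * (jb \<alpha> powr \<delta> * jb M powr (1/2 + \<delta>))\<^sup>2 *
      (Hs_norm s v1 * Hs_norm s v2 * Hs_norm s v3)\<^sup>2)"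
    using abs_le_sq_jb_powr[OF \<open>\<delta> \<ge> 0\<close>, of M \<alpha>]
    by (intro ennreal_leI mult_right_mono mult_left_mono) auto
  also have "\<dots> = ennreal ((sqrt (8 * 3 powr s) * jb \<alpha> powr \<delta> *
      jb M powr (1/2 + \<delta>) * Hs_norm s v1 * Hs_norm s v2 * Hs_norm s v3)\<^sup>2)"
    by (simp add: power_mult_distrib)
  finally show ?thesis .
next
  case False
  then show ?thesis
    by (simp add: Hs_enorm_sq_def T_hat_nonpos_eq_0)
qed

theorem lemma6:
  fixes s :: real
  assumes "s \<ge> 0"
  shows "\<forall>\<delta>>0. \<exists>C>0. \<forall>\<alpha> M v1 v2 v3.
           in_Hs s v1 \<longrightarrow> in_Hs s v2 \<longrightarrow> in_Hs s v3 \<longrightarrow>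
           Hs_enorm_sq s (T_hat \<alpha> M v1 v2 v3)
             \<le> ennreal ((C * jb \<alpha> powr \<delta> * jb M powr (1/2 + \<delta>) *
                         Hs_norm s v1 * Hs_norm s v2 * Hs_norm s v3)\<^sup>2)"
  using Hs_enorm_sq_T_hat_le_jb_powr[OF assms]
  by (intro allI impI exI[of _ "sqrt (8 * 3 powr s)"]) auto

end
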